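(* For every $L>\pi\sqrt2$, $a_L(L)=2\,b_L(L/2)$.
   Context: For $\alpha\in(0,1/\sqrt2)$ let $L_\alpha=\pi/\mathrm{AGM}(\alpha,\tfrac12\sqrt{1+2\alpha^2})$ (arithmetic–geometric mean); $\alpha\mapsto L_\alpha$ is a decreasing bijection from $(0,1/\sqrt2)$ onto $(\pi\sqrt2,\infty)$. For $L>\pi\sqrt2$ let $\alpha$ satisfy $L_\alpha=L$ and let $x_0>y_0>0$ satisfy $x_0^2+y_0^2=1$, $x_0y_0=\alpha^2$. Let $(x_L,y_L,z_L)(t)$ solve $x'=-xz$, $y'=yz$, $z'=x^2-y^2$ ($'=d/dt$) with initial value $(x_0,y_0,0)$, and let $a_L,b_L$ solve $a'=2x_L+az_L$, $b'=2y_L-bz_L$ with $a_L(0)=b_L(0)=0$. *)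

theory Defs
  imports "HOL-Analysis.Analysis"
begin

fun agm_iter :: "real \<Rightarrow> real \<Rightarrow> nat \<Rightarrow> real \<times> real" where
  "agm_iter a b 0 = (a, b)"
| "agm_iter a b (Suc n) =
     (let (p, q) = agm_iter a b n in ((p + q) / 2, sqrt (p * q)))"

definition AGM :: "real \<Rightarrow> real \<Rightarrow> real" where
  "AGM a b = lim (\<lambda>n. fst (agm_iter a b n))"

definition L_of :: "real \<Rightarrow> real" where
  "L_of \<alpha> = pi / AGM \<alpha> (sqrt (1 + 2 * \<alpha>\<^sup>2) / 2)"

end

theory Submission
  imports Defs
begin

text \<open>
  Along the flow, \<open>x y\<close> and \<open>x\<^sup>2 + y\<^sup>2 + z\<^sup>2\<close> are conserved, and the point
  \<open>(x - y, z)\<close> moves on the circle of radius \<open>x0 - y0\<close> with angular velocity \<open>x + y\<close>.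
  This velocity depends on the polar angle \<open>\<theta>\<close> alone,
  \<open>x + y = sqrt ((x0 + y0)\<^sup>2 cos\<^sup>2 \<theta> + 4 \<alpha>\<^sup>2 sin\<^sup>2 \<theta>)\<close>, so the time at which the angle
  reaches \<open>\<theta>\<close> is Gauss's integral of \<open>1 / (x + y)\<close> over \<open>[0, \<theta>]\<close>. By Gauss's AGM formula,
  proved here with Landen's transformation, a full turn takes exactly the time \<open>L\<close> and half a turn
  \<open>L / 2\<close>; at these times \<open>x L = y (L / 2) = x0\<close>.

  Since \<open>(a x)' = 2 x\<^sup>2\<close> and \<open>(b y)' = 2 y\<^sup>2\<close>, the products \<open>a L * x L\<close> and
  \<open>b (L / 2) * y (L / 2)\<close> are the integrals of \<open>2 x\<^sup>2 / (x + y)\<close> over a full turn and of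
  \<open>2 y\<^sup>2 / (x + y)\<close> over half a turn, written as functions of the angle. A half turn exchanges
  \<open>x\<close> and \<open>y\<close>, and the two integrands differ by \<open>2 (x0 - y0) cos \<theta>\<close>, whose integral over
  half a turn vanishes; hence the first integral is twice the second.
\<close>

subsection \<open>Primitives\<close>

text \<open>\<open>primitive f\<close> is the antiderivative of \<open>f\<close> vanishing at \<open>0\<close>; it is determined only if
  \<open>f\<close> has an antiderivative on the whole real line, e.g.\ if \<open>f\<close> is continuous.\<close>

definition primitive :: "(real \<Rightarrow> real) \<Rightarrow> real \<Rightarrow> real" where
  "primitive f = (SOME G. G 0 = 0 \<and> (\<forall>t. (G has_real_derivative f t) (at t)))"

lemma DERIV_eq_imp_diff_eq:
  fixes f g f' :: "real \<Rightarrow> real"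
  assumes "\<And>t. (f has_real_derivative f' t) (at t)" "\<And>t. (g has_real_derivative f' t) (at t)"
  shows "f s - g s = f t - g t"
  using DERIV_isconst_all[of "\<lambda>t. f t - g t"] DERIV_diff[OF assms] by simp

lemma primitive_antiderivative:
  assumes "\<And>t. (G has_real_derivative f t) (at t)"
  shows "primitive f 0 = 0" "(primitive f has_real_derivative f t) (at t)"
proof -
  have "\<exists>H. H 0 = 0 \<and> (\<forall>t. (H has_real_derivative f t) (at t))"
    by (rule exI[of _ "\<lambda>t. G t - G 0"]) (auto intro!: derivative_eq_intros assms)
  from someI_ex[OF this] show "primitive f 0 = 0" "(primitive f has_real_derivative f t) (at t)"
    unfolding primitive_def by auto
qed

lemma primitive_eq:
  assumes "\<And>t. (G has_real_derivative f t) (at t)"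
  shows "primitive f t = G t - G 0"
  using DERIV_eq_imp_diff_eq[OF primitive_antiderivative(2)[OF assms] assms, of t 0]
    primitive_antiderivative(1)[OF assms] by simp

lemma primitive_eqI:
  assumes "\<And>t. (G has_real_derivative f t) (at t)" "G 0 = 0"
  shows "primitive f = G"
  using primitive_eq[OF assms(1)] assms(2) by auto

lemma continuous_on_imp_has_antiderivative:
  assumes "continuous_on UNIV f"
  obtains G where "\<And>t. (G has_real_derivative f t) (at t)"
proof -
  have "isCont f x" for x
    using assms by (simp add: continuous_on_eq_continuous_at)
  then show ?thesis
    using einterval_antiderivative[of "-\<infinity>" "\<infinity>" f] that
    by (auto simp: has_real_derivative_iff_has_vector_derivative)
qed

lemma
  assumes "continuous_on UNIV f"
  shows primitive_zero: "primitive f 0 = 0"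
    and has_real_derivative_primitive: "(primitive f has_real_derivative f t) (at t)"
  using continuous_on_imp_has_antiderivative[OF assms] primitive_antiderivative by metis+

lemma primitive_const: "primitive (\<lambda>_. c) t = c * t"
  using primitive_eq[of "\<lambda>t. c * t" "\<lambda>_. c"] by (auto intro!: derivative_eq_intros)

lemma primitive_diff:
  assumes "continuous_on UNIV f" "continuous_on UNIV g"
  shows "primitive (\<lambda>u. f u - g u) t = primitive f t - primitive g t"
  using primitive_eq[OF DERIV_diff[OF has_real_derivative_primitive[OF assms(1)]
      has_real_derivative_primitive[OF assms(2)]]]
  by (simp add: primitive_zero assms)

lemma primitive_shift:
  assumes "continuous_on UNIV f"
  shows "primitive f (t + c) = primitive f c + primitive (\<lambda>u. f (u + c)) t"
proof -
  have "((\<lambda>u. primitive f (u + c)) has_real_derivative f (u + c)) (at u)" for u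
    using DERIV_chain2[OF has_real_derivative_primitive[OF assms] DERIV_add[OF DERIV_ident DERIV_const]]
    by simp
  from primitive_eq[OF this] show ?thesis by simp
qed

lemma primitive_periodic:
  assumes "continuous_on UNIV f" "\<And>u. f (u + c) = f u"
  shows "primitive f (real n * c) = real n * primitive f c"
proof (induction n)
  case (Suc n)
  have "primitive f (real (Suc n) * c) = primitive f (real n * c + c)"
    by (simp add: algebra_simps)
  also have "\<dots> = primitive f c + primitive f (real n * c)"
    unfolding primitive_shift[OF assms(1)] assms(2) ..
  finally show ?case using Suc by (simp add: algebra_simps)
qed (simp add: primitive_zero assms)

lemma primitive_mono:
  assumes "continuous_on UNIV f" "continuous_on UNIV g" "\<And>u. f u \<le> g u" "0 \<le> t"
  shows "primitive f t \<le> primitive g t"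
proof -
  have "((\<lambda>t. primitive g t - primitive f t) has_real_derivative g u - f u) (at u)" for u
    using DERIV_diff[OF has_real_derivative_primitive[OF assms(2)]
        has_real_derivative_primitive[OF assms(1)]] .
  then have "primitive g 0 - primitive f 0 \<le> primitive g t - primitive f t"
    by (intro DERIV_nonneg_imp_nondecreasing[OF assms(4)]) (use assms(3) in force)
  then show ?thesis by (simp add: primitive_zero assms)
qed

lemma strict_mono_primitive:
  assumes "continuous_on UNIV f" "\<And>u. 0 < f u"
  shows "strict_mono (primitive f)"
  using DERIV_pos_imp_increasing has_real_derivative_primitive[OF assms(1)] assms(2)
  by (metis strict_monoI)

lemma primitive_half_turn_squares:
  fixes F :: "real \<Rightarrow> real" and r :: real
  assumes "continuous_on UNIV F" "\<And>u. 0 < F u" "\<And>u. F (u + pi) = F u"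
  shows "primitive (\<lambda>u. (F u + r * cos u)\<^sup>2 / (2 * F u)) (2 * pi)
           = 2 * primitive (\<lambda>u. (F u - r * cos u)\<^sup>2 / (2 * F u)) pi"
proof -
  define f where "f u = (F u + r * cos u)\<^sup>2 / (2 * F u)" for u
  define g where "g u = (F u - r * cos u)\<^sup>2 / (2 * F u)" for u
  have cont: "continuous_on UNIV f" "continuous_on UNIV g"
    unfolding f_def g_def using assms(1,2) by (auto intro!: continuous_intros simp: less_imp_neq[symmetric])
  have "f (u + pi) = g u" for u
    unfolding f_def g_def assms(3) by simp
  then have "primitive f (pi + pi) = primitive f pi + primitive g pi"
    using primitive_shift[OF cont(1), of pi pi] by simp
  moreover have "primitive f pi - primitive g pi = 0"
  proof -
    have "f u - g u = 2 * r * cos u" for u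
      unfolding f_def g_def using assms(2)[of u] by (simp add: field_simps power2_eq_square)
    then have "primitive f pi - primitive g pi = primitive (\<lambda>u. 2 * r * cos u) pi"
      using primitive_diff[OF cont] by simp
    also have "\<dots> = 2 * r * sin pi"
      by (subst primitive_eqI[of "\<lambda>u. 2 * r * sin u"]) (auto intro!: derivative_eq_intros)
    finally show ?thesis by simp
  qed
  ultimately show ?thesis
    unfolding f_def g_def by simp
qed

subsection \<open>Gauss's integral and Landen's transformation\<close>

lemma cos_sin_combination_pos:
  fixes p q t :: real
  assumes "0 < p" "0 < q"
  shows "0 < p * (cos t)\<^sup>2 + q * (sin t)\<^sup>2"
proof -
  have "min p q * ((cos t)\<^sup>2 + (sin t)\<^sup>2) \<le> p * (cos t)\<^sup>2 + q * (sin t)\<^sup>2"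
    unfolding distrib_left by (intro add_mono mult_right_mono) auto
  then show ?thesis using assms by simp
qed

definition gauss_denom :: "real \<Rightarrow> real \<Rightarrow> real \<Rightarrow> real" where
  "gauss_denom p q t = sqrt (p\<^sup>2 * (cos t)\<^sup>2 + q\<^sup>2 * (sin t)\<^sup>2)"

lemma gauss_denom_sq: "(gauss_denom p q t)\<^sup>2 = p\<^sup>2 * (cos t)\<^sup>2 + q\<^sup>2 * (sin t)\<^sup>2"
  unfolding gauss_denom_def by simp

lemma gauss_denom_pos: "0 < p \<Longrightarrow> 0 < q \<Longrightarrow> 0 < gauss_denom p q t"
  unfolding gauss_denom_def using cos_sin_combination_pos[of "p\<^sup>2" "q\<^sup>2" t] by simp

lemma gauss_denom_add_pi: "gauss_denom p q (t + pi) = gauss_denom p q t"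
  unfolding gauss_denom_def by simp

lemma continuous_on_gauss_denom: "continuous_on A (gauss_denom p q)"
  unfolding gauss_denom_def[abs_def] by (intro continuous_intros)

lemma gauss_denom_bounds:
  assumes "0 < p" "0 < q"
  shows "min p q \<le> gauss_denom p q t" "gauss_denom p q t \<le> max p q"
proof -
  have "(min p q)\<^sup>2 \<le> p\<^sup>2" "(min p q)\<^sup>2 \<le> q\<^sup>2" "p\<^sup>2 \<le> (max p q)\<^sup>2" "q\<^sup>2 \<le> (max p q)\<^sup>2"
    using assms by (auto intro!: power_mono)
  then have "(min p q)\<^sup>2 * ((cos t)\<^sup>2 + (sin t)\<^sup>2) \<le> (gauss_denom p q t)\<^sup>2"
    "(gauss_denom p q t)\<^sup>2 \<le> (max p q)\<^sup>2 * ((cos t)\<^sup>2 + (sin t)\<^sup>2)"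
    unfolding gauss_denom_sq distrib_left by (intro add_mono mult_right_mono; simp)+
  then show "min p q \<le> gauss_denom p q t" "gauss_denom p q t \<le> max p q"
    using assms gauss_denom_pos[OF assms, of t] by (auto intro: power2_le_imp_le)
qed

text \<open>Landen's substitution maps \<open>[0, 2 pi]\<close> onto \<open>[0, 4 pi]\<close> and turns the integrand
  \<open>1 / gauss_denom\<close> for the arithmetic and geometric means of \<open>p\<close> and \<open>q\<close> into twice the
  one for \<open>p\<close> and \<open>q\<close>.\<close>

definition landen_angle :: "real \<Rightarrow> real \<Rightarrow> real \<Rightarrow> real" where
  "landen_angle p q t =
     2 * t - arctan ((p - q) * sin t * cos t / (p * (cos t)\<^sup>2 + q * (sin t)\<^sup>2))"

lemma landen_angle_cos_sin:
  fixes p q t :: real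
  assumes "0 < p" "0 < q"
  shows "cos (landen_angle p q t) = (p * (cos t)\<^sup>2 - q * (sin t)\<^sup>2) / gauss_denom p q t"
    and "sin (landen_angle p q t) = (p + q) * sin t * cos t / gauss_denom p q t"
proof -
  define C where "C = cos t"
  define S where "S = sin t"
  define D where "D = p * C\<^sup>2 + q * S\<^sup>2"
  define N where "N = (p - q) * S * C"
  define F where "F = gauss_denom p q t"
  have CS: "C\<^sup>2 + S\<^sup>2 = 1" unfolding C_def S_def by simp
  have D: "0 < D" unfolding D_def N_def C_def S_def using cos_sin_combination_pos[OF assms] .
  have F: "0 < F" unfolding F_def using gauss_denom_pos[OF assms] .
  have "F\<^sup>2 = D\<^sup>2 + N\<^sup>2"
    unfolding F_def gauss_denom_sq D_def N_def C_def[symmetric] S_def[symmetric] using CS by algebra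
  then have "sqrt (1 + (N / D)\<^sup>2) = F / D"
    using D F by (intro real_sqrt_unique) (auto simp: field_simps)
  then have arctan: "cos (arctan (N / D)) = D / F" "sin (arctan (N / D)) = N / F"
    unfolding cos_arctan sin_arctan using D by simp_all
  have h: "landen_angle p q t = 2 * t - arctan (N / D)"
    unfolding landen_angle_def D_def N_def C_def S_def ..
  show "cos (landen_angle p q t) = (p * (cos t)\<^sup>2 - q * (sin t)\<^sup>2) / gauss_denom p q t"
    unfolding h cos_diff arctan cos_double sin_double C_def[symmetric] S_def[symmetric] F_def[symmetric]
    using CS F by (simp add: field_simps D_def N_def) algebra
  show "sin (landen_angle p q t) = (p + q) * sin t * cos t / gauss_denom p q t"
    unfolding h sin_diff arctan cos_double sin_double C_def[symmetric] S_def[symmetric] F_def[symmetric]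
    using CS F by (simp add: field_simps D_def N_def) algebra
qed

lemma landen_angle_deriv:
  fixes p q t :: real
  assumes "0 < p" "0 < q"
  shows "(landen_angle p q has_real_derivative
           (p + q) * (p * (cos t)\<^sup>2 + q * (sin t)\<^sup>2) / (gauss_denom p q t)\<^sup>2) (at t)"
proof -
  define C where "C = cos t"
  define S where "S = sin t"
  define D where "D = p * C\<^sup>2 + q * S\<^sup>2"
  define N where "N = (p - q) * S * C"
  define D' where "D' = 2 * (q - p) * S * C"
  define N' where "N' = (p - q) * (C\<^sup>2 - S\<^sup>2)"
  have CS: "C\<^sup>2 + S\<^sup>2 = 1" unfolding C_def S_def by simp
  have D: "0 < D" unfolding D_def C_def S_def using cos_sin_combination_pos[OF assms] .
  have F2: "(gauss_denom p q t)\<^sup>2 = D\<^sup>2 + N\<^sup>2"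
    unfolding gauss_denom_sq D_def N_def C_def[symmetric] S_def[symmetric] using CS by algebra
  define Q where "Q = D\<^sup>2 + N\<^sup>2"
  have Q: "0 < Q" unfolding Q_def using D by (simp add: add_pos_nonneg)
  have dN: "((\<lambda>t. (p - q) * sin t * cos t) has_real_derivative N') (at t)"
    unfolding N'_def C_def S_def
    by (auto intro!: derivative_eq_intros simp: power2_eq_square algebra_simps)
  have dD: "((\<lambda>t. p * (cos t)\<^sup>2 + q * (sin t)\<^sup>2) has_real_derivative D') (at t)"
    unfolding D'_def C_def S_def
    by (auto intro!: derivative_eq_intros simp: power2_eq_square algebra_simps)
  have "((\<lambda>t. 2 * t) has_real_derivative 2) (at t)"
    by (auto intro!: derivative_eq_intros)
  from DERIV_diff[OF this DERIV_chain2[OF DERIV_arctan DERIV_divide[OF dN dD]]]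
  have deriv: "(landen_angle p q has_real_derivative
          2 - inverse (1 + (N / D)\<^sup>2) * ((N' * D - N * D') / (D * D))) (at t)"
    using D unfolding landen_angle_def[abs_def] D_def N_def C_def S_def by simp
  have "inverse (1 + (N / D)\<^sup>2) = D\<^sup>2 / Q"
    unfolding Q_def using D by (simp add: field_simps)
  then have "2 - inverse (1 + (N / D)\<^sup>2) * ((N' * D - N * D') / (D * D))
      = (2 * Q - (N' * D - N * D')) / Q"
    using D Q by (simp add: field_simps power2_eq_square)
  also have "2 * Q - (N' * D - N * D') = (p + q) * D"
    unfolding Q_def D_def N_def D'_def N'_def using CS by algebra
  finally have "(landen_angle p q has_real_derivative (p + q) * D / Q) (at t)"
    using deriv by simp
  then show ?thesis
    unfolding F2 Q_def[symmetric] by (simp add: D_def C_def S_def)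
qed

lemma gauss_denom_landen_angle:
  fixes p q t :: real
  assumes "0 < p" "0 < q"
  shows "gauss_denom ((p + q) / 2) (sqrt (p * q)) (landen_angle p q t)
           = (p + q) * (p * (cos t)\<^sup>2 + q * (sin t)\<^sup>2) / (2 * gauss_denom p q t)"
proof -
  define C where "C = cos t"
  define S where "S = sin t"
  define F where "F = gauss_denom p q t"
  have CS: "C\<^sup>2 + S\<^sup>2 = 1" unfolding C_def S_def by simp
  have F: "0 < F" unfolding F_def using gauss_denom_pos[OF assms] .
  have "(gauss_denom ((p + q) / 2) (sqrt (p * q)) (landen_angle p q t))\<^sup>2
      = (p + q)\<^sup>2 * ((p * C\<^sup>2 - q * S\<^sup>2)\<^sup>2 + 4 * (p * q) * (S * C)\<^sup>2) / (4 * F\<^sup>2)"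
    using assms F unfolding gauss_denom_sq landen_angle_cos_sin[OF assms] F_def[symmetric]
      C_def[symmetric] S_def[symmetric]
    by (simp add: field_simps power2_eq_square)
  also have "(p * C\<^sup>2 - q * S\<^sup>2)\<^sup>2 + 4 * (p * q) * (S * C)\<^sup>2 = (p * C\<^sup>2 + q * S\<^sup>2)\<^sup>2"
    by algebra
  also have "(p + q)\<^sup>2 * (p * C\<^sup>2 + q * S\<^sup>2)\<^sup>2 / (4 * F\<^sup>2)
      = ((p + q) * (p * C\<^sup>2 + q * S\<^sup>2) / (2 * F))\<^sup>2"
    by (simp add: power_mult_distrib power_divide)
  finally show ?thesis
    using assms F cos_sin_combination_pos[OF assms, of t]
    unfolding F_def C_def S_def by (auto simp: gauss_denom_def intro!: power2_eq_imp_eq)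
qed

definition gauss_integral :: "real \<Rightarrow> real \<Rightarrow> real \<Rightarrow> real" where
  "gauss_integral p q = primitive (\<lambda>t. 1 / gauss_denom p q t)"

lemma continuous_on_inverse_gauss_denom:
  "0 < p \<Longrightarrow> 0 < q \<Longrightarrow> continuous_on A (\<lambda>t. 1 / gauss_denom p q t)"
  using gauss_denom_pos[of p q] by (intro continuous_intros continuous_on_gauss_denom) (metis less_irrefl)

lemma
  assumes "0 < p" "0 < q"
  shows gauss_integral_zero: "gauss_integral p q 0 = 0"
    and has_real_derivative_gauss_integral:
      "(gauss_integral p q has_real_derivative 1 / gauss_denom p q t) (at t)"
  unfolding gauss_integral_def
  using primitive_zero has_real_derivative_primitive continuous_on_inverse_gauss_denom[OF assms]
  by blast+

lemma gauss_integral_multiple_pi: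
  "0 < p \<Longrightarrow> 0 < q \<Longrightarrow> gauss_integral p q (real n * pi) = real n * gauss_integral p q pi"
  unfolding gauss_integral_def
  by (intro primitive_periodic continuous_on_inverse_gauss_denom) (simp_all add: gauss_denom_add_pi)

lemma gauss_integral_landen:
  fixes p q :: real
  assumes "0 < p" "0 < q"
  shows "gauss_integral ((p + q) / 2) (sqrt (p * q)) (2 * pi) = gauss_integral p q (2 * pi)"
proof -
  define p' where "p' = (p + q) / 2"
  define q' where "q' = sqrt (p * q)"
  have pq': "0 < p'" "0 < q'" unfolding p'_def q'_def using assms by simp_all
  have "((\<lambda>t. gauss_integral p' q' (landen_angle p q t)) has_real_derivative
          2 / gauss_denom p q t) (at t)" for t
  proof -
    define P where "P = (p + q) * (p * (cos t)\<^sup>2 + q * (sin t)\<^sup>2)"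
    define F where "F = gauss_denom p q t"
    have "0 < P" "0 < F"
      unfolding P_def F_def using assms cos_sin_combination_pos[OF assms] gauss_denom_pos[OF assms]
      by simp_all
    then have "1 / (P / (2 * F)) * (P / F\<^sup>2) = 2 / F"
      by (simp add: field_simps power2_eq_square)
    with DERIV_chain2[OF has_real_derivative_gauss_integral[OF pq'] landen_angle_deriv[OF assms, of t]]
    show ?thesis
      unfolding p'_def q'_def gauss_denom_landen_angle[OF assms] P_def[symmetric] F_def[symmetric]
      by simp
  qed
  moreover have "((\<lambda>t. 2 * gauss_integral p q t) has_real_derivative 2 / gauss_denom p q t) (at t)" for t
    using DERIV_cmult[OF has_real_derivative_gauss_integral[OF assms], of 2] by simp
  ultimately have "gauss_integral p' q' (landen_angle p q (2 * pi)) - 2 * gauss_integral p q (2 * pi)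
      = gauss_integral p' q' (landen_angle p q 0) - 2 * gauss_integral p q 0"
    by (rule DERIV_eq_imp_diff_eq)
  moreover have "landen_angle p q (2 * pi) = 4 * pi" "landen_angle p q 0 = 0"
    unfolding landen_angle_def by simp_all
  ultimately show ?thesis
    using gauss_integral_multiple_pi[OF pq', of 4] gauss_integral_multiple_pi[OF pq', of 2]
      gauss_integral_multiple_pi[OF assms, of 2] gauss_integral_zero[OF assms]
      gauss_integral_zero[OF pq']
    unfolding p'_def q'_def by simp
qed

lemma gauss_integral_2pi_bounds:
  assumes "0 < p" "0 < q"
  shows "2 * pi / max p q \<le> gauss_integral p q (2 * pi)"
    and "gauss_integral p q (2 * pi) \<le> 2 * pi / min p q"
proof -
  have "primitive (\<lambda>_. 1 / max p q) (2 * pi) \<le> gauss_integral p q (2 * pi)"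
    unfolding gauss_integral_def using assms gauss_denom_bounds(2)[OF assms] gauss_denom_pos[OF assms]
    by (intro primitive_mono continuous_on_inverse_gauss_denom) (auto intro!: frac_le)
  then show "2 * pi / max p q \<le> gauss_integral p q (2 * pi)"
    by (simp add: primitive_const)
  have "gauss_integral p q (2 * pi) \<le> primitive (\<lambda>_. 1 / min p q) (2 * pi)"
    unfolding gauss_integral_def using assms gauss_denom_bounds(1)[OF assms]
    by (intro primitive_mono continuous_on_inverse_gauss_denom) (auto intro!: frac_le)
  then show "gauss_integral p q (2 * pi) \<le> 2 * pi / min p q"
    by (simp add: primitive_const)
qed

lemma gauss_integral_2pi_pos:
  assumes "0 < p" "0 < q"
  shows "0 < gauss_integral p q (2 * pi)"
proof -
  have "0 < 2 * pi / max p q"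
    using assms by simp
  then show ?thesis
    using gauss_integral_2pi_bounds(1)[OF assms] by linarith
qed

subsection \<open>The arithmetic-geometric mean\<close>

lemma agm_iter_pos:
  assumes "0 < a" "0 < b"
  shows "0 < fst (agm_iter a b n)" "0 < snd (agm_iter a b n)"
  using assms by (induction n) (auto simp: split_beta)

lemma agm_iter_Suc_shift:
  "agm_iter a b (Suc n) = agm_iter ((a + b) / 2) (sqrt (a * b)) n"
  by (induction n) (simp_all add: split_beta)

lemma agm_iter_scale:
  assumes "0 \<le> c"
  shows "agm_iter (c * a) (c * b) n = (c * fst (agm_iter a b n), c * snd (agm_iter a b n))"
proof (induction n)
  case (Suc n)
  have "sqrt (c * fst (agm_iter a b n) * (c * snd (agm_iter a b n)))
      = c * sqrt (fst (agm_iter a b n) * snd (agm_iter a b n))"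
    using assms by (simp add: real_sqrt_mult mult_ac)
  with Suc show ?case by (simp add: split_beta algebra_simps)
qed simp

lemma agm_step_gap:
  fixes p q :: real
  assumes "0 \<le> p" "0 \<le> q"
  shows "\<bar>(p + q) / 2 - sqrt (p * q)\<bar> \<le> \<bar>p - q\<bar> / 2"
proof -
  have "min p q = sqrt (min p q * min p q)"
    using assms by simp
  also have "\<dots> \<le> sqrt (p * q)"
    using assms by (intro real_sqrt_le_mono mult_mono) auto
  finally have "min p q \<le> sqrt (p * q)" .
  moreover have "(p + q) / 2 - min p q = \<bar>p - q\<bar> / 2"
    by (simp add: min_def abs_if field_simps)
  ultimately show ?thesis
    using arith_geo_mean_sqrt[OF assms] by linarith
qed

lemma agm_iter_gap:
  assumes "0 < a" "0 < b"
  shows "\<bar>fst (agm_iter a b n) - snd (agm_iter a b n)\<bar> \<le> \<bar>a - b\<bar> / 2 ^ n"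
proof (induction n)
  case (Suc n)
  have "\<bar>fst (agm_iter a b (Suc n)) - snd (agm_iter a b (Suc n))\<bar>
      \<le> \<bar>fst (agm_iter a b n) - snd (agm_iter a b n)\<bar> / 2"
    using agm_step_gap[of "fst (agm_iter a b n)" "snd (agm_iter a b n)"] agm_iter_pos[OF assms]
    by (simp add: split_beta less_imp_le)
  also have "\<dots> \<le> \<bar>a - b\<bar> / 2 ^ Suc n"
    using Suc by simp
  finally show ?case .
qed simp

lemma gauss_integral_agm_iter:
  assumes "0 < a" "0 < b"
  shows "gauss_integral (fst (agm_iter a b n)) (snd (agm_iter a b n)) (2 * pi)
           = gauss_integral a b (2 * pi)"
proof (induction n)
  case (Suc n)
  then show ?case
    using gauss_integral_landen[OF agm_iter_pos[OF assms, of n]] by (simp add: split_beta)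
qed simp

theorem agm_iter_tendsto_gauss_integral:
  assumes "0 < a" "0 < b"
  shows "(\<lambda>n. fst (agm_iter a b n)) \<longlonglongrightarrow> 2 * pi / gauss_integral a b (2 * pi)"
proof -
  define an where "an n = fst (agm_iter a b n)" for n
  define bn where "bn n = snd (agm_iter a b n)" for n
  define c where "c = 2 * pi / gauss_integral a b (2 * pi)"
  have "\<bar>an n - c\<bar> \<le> \<bar>a - b\<bar> / 2 ^ n" for n
  proof -
    have pos: "0 < an n" "0 < bn n"
      unfolding an_def bn_def using agm_iter_pos[OF assms] by auto
    have G: "gauss_integral a b (2 * pi) = gauss_integral (an n) (bn n) (2 * pi)"
      unfolding an_def bn_def gauss_integral_agm_iter[OF assms] ..
    have "min (an n) (bn n) \<le> c" "c \<le> max (an n) (bn n)"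
      using gauss_integral_2pi_bounds[OF pos] gauss_integral_2pi_pos[OF pos] pos unfolding c_def G
      by (simp_all add: pos_divide_le_eq pos_le_divide_eq mult.commute)
    then have "\<bar>an n - c\<bar> \<le> \<bar>an n - bn n\<bar>"
      by (auto simp: min_def max_def abs_if split: if_splits)
    also have "\<dots> \<le> \<bar>a - b\<bar> / 2 ^ n"
      unfolding an_def bn_def using agm_iter_gap[OF assms] .
    finally show ?thesis .
  qed
  then have "(\<lambda>n. an n - c) \<longlonglongrightarrow> 0"
    by (intro Lim_null_comparison[OF always_eventually LIMSEQ_divide_realpow_zero[of 2 "\<bar>a - b\<bar>"]])
       simp_all
  then show ?thesis
    unfolding an_def c_def by (simp add: LIM_zero_iff)
qed

corollary AGM_eq_gauss_integral:
  assumes "0 < a" "0 < b"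
  shows "AGM a b = 2 * pi / gauss_integral a b (2 * pi)"
  unfolding AGM_def using agm_iter_tendsto_gauss_integral[OF assms] by (rule limI)

lemma agm_iter_tendsto_AGM:
  assumes "0 < a" "0 < b"
  shows "(\<lambda>n. fst (agm_iter a b n)) \<longlonglongrightarrow> AGM a b"
  using agm_iter_tendsto_gauss_integral[OF assms] unfolding AGM_eq_gauss_integral[OF assms] .

lemma AGM_scale:
  assumes "0 < c" "0 < a" "0 < b"
  shows "AGM (c * a) (c * b) = c * AGM a b"
proof -
  have "(\<lambda>n. fst (agm_iter (c * a) (c * b) n)) \<longlonglongrightarrow> c * AGM a b"
    unfolding agm_iter_scale[OF less_imp_le[OF assms(1)]] fst_conv
    by (intro tendsto_mult_left agm_iter_tendsto_AGM assms)
  then show ?thesis unfolding AGM_def by (rule limI)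
qed

lemma AGM_commute:
  assumes "0 < a" "0 < b"
  shows "AGM a b = AGM b a"
proof -
  have "(\<lambda>n. fst (agm_iter a b (Suc n))) \<longlonglongrightarrow> AGM a b"
    using LIMSEQ_Suc[OF agm_iter_tendsto_AGM[OF assms]] .
  then have "(\<lambda>n. fst (agm_iter b a (Suc n))) \<longlonglongrightarrow> AGM a b"
    unfolding agm_iter_Suc_shift by (simp add: add.commute mult.commute)
  then have "(\<lambda>n. fst (agm_iter b a n)) \<longlonglongrightarrow> AGM a b"
    by (rule LIMSEQ_imp_Suc)
  then show ?thesis
    unfolding AGM_def[of b a] by (rule limI[symmetric])
qed

corollary gauss_integral_2pi_AGM:
  assumes "0 < p" "0 < q"
  shows "gauss_integral p q (2 * pi) = 2 * pi / AGM p q"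
  using AGM_eq_gauss_integral[OF assms] gauss_integral_2pi_pos[OF assms] by simp

lemma gauss_integral_2pi_AGM_half:
  assumes "0 < p" "0 < q"
  shows "gauss_integral p (2 * q) (2 * pi) = pi / AGM q (p / 2)"
proof -
  have "AGM p (2 * q) = 2 * AGM q (p / 2)"
    using AGM_scale[of 2 "p / 2" q] AGM_commute[of "p / 2" q] assms by simp
  then show ?thesis
    using gauss_integral_2pi_AGM[of p "2 * q"] assms by simp
qed

subsection \<open>The flow\<close>

locale xyz_orbit =
  fixes x y z :: "real \<Rightarrow> real" and x0 y0 :: real
  assumes x_deriv: "\<And>t. (x has_real_derivative - (x t * z t)) (at t)"
    and y_deriv: "\<And>t. (y has_real_derivative y t * z t) (at t)"
    and z_deriv: "\<And>t. (z has_real_derivative (x t)\<^sup>2 - (y t)\<^sup>2) (at t)"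
    and initial: "x 0 = x0" "y 0 = y0" "z 0 = 0"
    and x0_pos: "0 < x0" and y0_pos: "0 < y0"
    and initial_sphere: "x0\<^sup>2 + y0\<^sup>2 = 1"
begin

lemma continuous_on_z: "continuous_on UNIV z"
  using z_deriv by (intro continuous_at_imp_continuous_on) (auto intro: DERIV_continuous)

lemma has_real_derivative_exp_primitive_z:
  "((\<lambda>t. exp (c * primitive z t)) has_real_derivative c * z t * exp (c * primitive z t)) (at t)"
  using DERIV_chain2[OF DERIV_exp DERIV_cmult[OF has_real_derivative_primitive[OF continuous_on_z]]]
  by (simp add: mult_ac)

lemma x_eq_exp: "x t = x0 * exp (- primitive z t)"
proof -
  have "((\<lambda>t. x t * exp (primitive z t)) has_real_derivative 0) (at t)" for t
    using DERIV_mult[OF x_deriv has_real_derivative_exp_primitive_z[of 1]] by simp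
  from DERIV_isconst_all[OF allI[OF this], of t 0] show ?thesis
    using initial primitive_zero[OF continuous_on_z] by (simp add: exp_minus field_simps)
qed

lemma y_eq_exp: "y t = y0 * exp (primitive z t)"
proof -
  have "((\<lambda>t. y t * exp (- primitive z t)) has_real_derivative 0) (at t)" for t
    using DERIV_mult[OF y_deriv has_real_derivative_exp_primitive_z[of "-1"]] by simp
  from DERIV_isconst_all[OF allI[OF this], of t 0] show ?thesis
    using initial primitive_zero[OF continuous_on_z] by (simp add: exp_minus field_simps)
qed

lemma x_pos: "0 < x t" and y_pos: "0 < y t"
  unfolding x_eq_exp y_eq_exp using x0_pos y0_pos by simp_all

lemma x_mult_y: "x t * y t = x0 * y0"
  unfolding x_eq_exp y_eq_exp by (simp add: exp_minus field_simps)

lemma sum_squares_eq_1: "(x t)\<^sup>2 + (y t)\<^sup>2 + (z t)\<^sup>2 = 1"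
proof -
  have "((\<lambda>t. (x t)\<^sup>2 + (y t)\<^sup>2 + (z t)\<^sup>2) has_real_derivative 0) (at t)" for t
    by (rule DERIV_cong, (rule derivative_eq_intros x_deriv y_deriv z_deriv refl)+)
       (simp add: algebra_simps power2_eq_square)
  from DERIV_isconst_all[OF allI[OF this], of t 0] show ?thesis
    using initial initial_sphere by simp
qed

text \<open>\<open>angle t\<close> is the polar angle of \<open>(x t - y t, z t)\<close>.\<close>

definition angle :: "real \<Rightarrow> real" where
  "angle = primitive (\<lambda>t. x t + y t)"

abbreviation speed :: "real \<Rightarrow> real" where
  "speed \<equiv> gauss_denom (x0 + y0) (2 * sqrt (x0 * y0))"

lemma continuous_on_x_plus_y: "continuous_on UNIV (\<lambda>t. x t + y t)"
  using x_deriv y_deriv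
  by (intro continuous_at_imp_continuous_on ballI continuous_add) (auto intro: DERIV_continuous)

lemma angle_0: "angle 0 = 0"
  and angle_deriv: "(angle has_real_derivative x t + y t) (at t)"
  unfolding angle_def using continuous_on_x_plus_y
  by (rule primitive_zero, rule has_real_derivative_primitive)

lemma angle_polar:
  "x t - y t = (x0 - y0) * cos (angle t) \<and> z t = (x0 - y0) * sin (angle t)"
proof -
  define E where "E t = (x t - y t - (x0 - y0) * cos (angle t))\<^sup>2 + (z t - (x0 - y0) * sin (angle t))\<^sup>2"
    for t
  have "(E has_real_derivative 0) (at t)" for t
    unfolding E_def
    by (rule DERIV_cong, (rule derivative_eq_intros x_deriv y_deriv z_deriv angle_deriv refl)+)
       (simp add: algebra_simps power2_eq_square)
  from DERIV_isconst_all[OF allI[OF this], of t 0] have "E t = 0"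
    using initial angle_0 unfolding E_def by simp
  then show ?thesis
    unfolding E_def by (simp add: add_nonneg_eq_0_iff)
qed

lemma x_plus_y_eq_speed: "x t + y t = speed (angle t)"
proof -
  have "(x t + y t)\<^sup>2 = (x t)\<^sup>2 + (y t)\<^sup>2 + 2 * (x t * y t)"
    by (simp add: power2_eq_square algebra_simps)
  also have "\<dots> = 1 - (z t)\<^sup>2 + 2 * (x0 * y0)"
    using sum_squares_eq_1[of t] x_mult_y[of t] by simp
  also have "\<dots> = (speed (angle t))\<^sup>2"
  proof -
    have "(2 * sqrt (x0 * y0))\<^sup>2 = 4 * (x0 * y0)"
      using x0_pos y0_pos by (simp add: power_mult_distrib)
    then show ?thesis
      unfolding gauss_denom_sq angle_polar[THEN conjunct2]
      using initial_sphere sin_cos_squared_add[of "angle t"] by algebra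
  qed
  finally show ?thesis
    using x_pos[of t] y_pos[of t] by (simp add: gauss_denom_def real_sqrt_unique)
qed

lemma speed_params_pos: "0 < x0 + y0" "0 < 2 * sqrt (x0 * y0)"
  using x0_pos y0_pos by simp_all

lemma speed_pos: "0 < speed \<theta>"
  using gauss_denom_pos[OF speed_params_pos] .

lemma gauss_integral_angle: "gauss_integral (x0 + y0) (2 * sqrt (x0 * y0)) (angle t) = t"
proof -
  have "((\<lambda>t. gauss_integral (x0 + y0) (2 * sqrt (x0 * y0)) (angle t)) has_real_derivative 1) (at t)"
    for t
    using DERIV_chain2[OF has_real_derivative_gauss_integral[OF speed_params_pos] angle_deriv[of t]]
      speed_pos[of "angle t"] unfolding x_plus_y_eq_speed by simp
  from DERIV_eq_imp_diff_eq[OF this DERIV_ident, of t 0] show ?thesis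
    using angle_0 gauss_integral_zero[OF speed_params_pos] by simp
qed

lemma angle_eqI:
  assumes "gauss_integral (x0 + y0) (2 * sqrt (x0 * y0)) \<theta> = t"
  shows "angle t = \<theta>"
proof -
  have "strict_mono (gauss_integral (x0 + y0) (2 * sqrt (x0 * y0)))"
    unfolding gauss_integral_def using speed_pos
    by (intro strict_mono_primitive continuous_on_inverse_gauss_denom speed_params_pos) simp
  then show ?thesis
    using gauss_integral_angle[of t] assms by (metis strict_mono_eq)
qed

lemma x_eq_x0_if_angle_2pi: "angle t = 2 * pi \<Longrightarrow> x t = x0"
  and y_eq_x0_if_angle_pi: "angle t = pi \<Longrightarrow> y t = x0"
  using x_plus_y_eq_speed[of t] angle_polar[of t] x0_pos y0_pos by (simp_all add: gauss_denom_def)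

lemma eq_primitive_angle:
  assumes "continuous_on UNIV f"
    and "\<And>t. (H has_real_derivative f (angle t) * (x t + y t)) (at t)" "H 0 = 0"
  shows "H t = primitive f (angle t)"
  using DERIV_eq_imp_diff_eq[OF assms(2) DERIV_chain2[OF has_real_derivative_primitive[OF assms(1)]
      angle_deriv], of t 0] assms(3) angle_0 primitive_zero[OF assms(1)]
  by simp

lemma continuous_on_speed_square_ratio:
  "continuous_on UNIV (\<lambda>\<theta>. (speed \<theta> + c * cos \<theta>)\<^sup>2 / (2 * speed \<theta>))"
  using speed_pos
  by (intro continuous_intros continuous_on_gauss_denom) (metis less_irrefl mult_eq_0_iff zero_neq_numeral)

lemma eq_primitive_speed_square_ratio:
  assumes "\<And>t. (H has_real_derivative 2 * (w t)\<^sup>2) (at t)" "H 0 = 0"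
    and "\<And>t. 2 * w t = speed (angle t) + c * cos (angle t)"
  shows "H t = primitive (\<lambda>\<theta>. (speed \<theta> + c * cos \<theta>)\<^sup>2 / (2 * speed \<theta>)) (angle t)"
proof (rule eq_primitive_angle[OF continuous_on_speed_square_ratio])
  fix t
  have "(speed (angle t) + c * cos (angle t))\<^sup>2 / (2 * speed (angle t)) * (x t + y t)
      = (2 * w t)\<^sup>2 / (2 * speed (angle t)) * speed (angle t)"
    unfolding x_plus_y_eq_speed assms(3) ..
  also have "\<dots> = 2 * (w t)\<^sup>2"
    using speed_pos[of "angle t"] by (simp add: power2_eq_square)
  finally show "(H has_real_derivative
      (speed (angle t) + c * cos (angle t))\<^sup>2 / (2 * speed (angle t)) * (x t + y t)) (at t)"
    using assms(1) by simp
qed (fact assms(2))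

lemma mult_x_eq_primitive:
  assumes "\<And>t. (a has_real_derivative 2 * x t + a t * z t) (at t)" "a 0 = 0"
  shows "a t * x t
    = primitive (\<lambda>\<theta>. (speed \<theta> + (x0 - y0) * cos \<theta>)\<^sup>2 / (2 * speed \<theta>)) (angle t)"
proof (rule eq_primitive_speed_square_ratio)
  show "((\<lambda>t. a t * x t) has_real_derivative 2 * (x t)\<^sup>2) (at t)" for t
    using DERIV_mult[OF assms(1) x_deriv, of t] by (simp add: algebra_simps power2_eq_square)
  show "2 * x t = speed (angle t) + (x0 - y0) * cos (angle t)" for t
    using x_plus_y_eq_speed[of t] angle_polar[of t] by simp
qed (simp add: assms(2))

lemma mult_y_eq_primitive:
  assumes "\<And>t. (b has_real_derivative 2 * y t - b t * z t) (at t)" "b 0 = 0"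
  shows "b t * y t
    = primitive (\<lambda>\<theta>. (speed \<theta> - (x0 - y0) * cos \<theta>)\<^sup>2 / (2 * speed \<theta>)) (angle t)"
proof -
  have "b t * y t
    = primitive (\<lambda>\<theta>. (speed \<theta> + (y0 - x0) * cos \<theta>)\<^sup>2 / (2 * speed \<theta>)) (angle t)"
  proof (rule eq_primitive_speed_square_ratio)
    show "((\<lambda>t. b t * y t) has_real_derivative 2 * (y t)\<^sup>2) (at t)" for t
      using DERIV_mult[OF assms(1) y_deriv, of t] by (simp add: algebra_simps power2_eq_square)
    show "2 * y t = speed (angle t) + (y0 - x0) * cos (angle t)" for t
      using x_plus_y_eq_speed[of t] angle_polar[of t] by (simp add: algebra_simps)
  qed (simp add: assms(2))
  then show ?thesis by (simp add: algebra_simps)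
qed

end

theorem lemma5p2:
  fixes L \<alpha> x0 y0 :: real
    and x y z a b :: "real \<Rightarrow> real"
  assumes "L > pi * sqrt 2"
    and "0 < \<alpha>" "\<alpha> < 1 / sqrt 2" "L_of \<alpha> = L"
    and "x0 > y0" "y0 > 0" "x0\<^sup>2 + y0\<^sup>2 = 1" "x0 * y0 = \<alpha>\<^sup>2"
    and "\<And>t. (x has_real_derivative (- (x t * z t))) (at t)"
    and "\<And>t. (y has_real_derivative (y t * z t)) (at t)"
    and "\<And>t. (z has_real_derivative ((x t)\<^sup>2 - (y t)\<^sup>2)) (at t)"
    and "x 0 = x0" "y 0 = y0" "z 0 = 0"
    and "\<And>t. (a has_real_derivative (2 * x t + a t * z t)) (at t)"
    and "\<And>t. (b has_real_derivative (2 * y t - b t * z t)) (at t)"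
    and "a 0 = 0" "b 0 = 0"
  shows "a L = 2 * b (L / 2)"
proof -
  interpret xyz_orbit x y z x0 y0
    using assms(5-7,9-14) by unfold_locales auto
  have "(x0 + y0)\<^sup>2 = 1 + 2 * \<alpha>\<^sup>2"
    using assms(7,8) by (simp add: power2_sum)
  then have "sqrt (1 + 2 * \<alpha>\<^sup>2) = x0 + y0" and "sqrt (x0 * y0) = \<alpha>"
    using assms(2,8) x0_pos y0_pos by (simp_all add: real_sqrt_unique)
  then have period: "gauss_integral (x0 + y0) (2 * sqrt (x0 * y0)) (2 * pi) = L"
    using gauss_integral_2pi_AGM_half[of "x0 + y0" \<alpha>] assms(2,4) x0_pos y0_pos
    by (simp add: L_of_def)
  then have "angle L = 2 * pi"
    by (rule angle_eqI)
  moreover have "angle (L / 2) = pi"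
    using period gauss_integral_multiple_pi[OF speed_params_pos, of 2]
    by (intro angle_eqI) simp
  ultimately have "a L * x0 = 2 * (b (L / 2) * x0)"
    using mult_x_eq_primitive[OF assms(15,17), of L] mult_y_eq_primitive[OF assms(16,18), of "L / 2"]
      x_eq_x0_if_angle_2pi y_eq_x0_if_angle_pi
      primitive_half_turn_squares[OF continuous_on_gauss_denom speed_pos gauss_denom_add_pi]
    by simp
  then show ?thesis
    using x0_pos by simp
qed

end
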